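(* For every $\alpha \in (0,\frac12)$ it holds that $T_\alpha(\alpha) = T_\alpha^2(1-\alpha)$.
   Context: For $\alpha \in (0,1)$ let $D_\alpha = \bigcup_{n \ge 1} \big[ \frac{1}{n+\alpha}, \frac1n \big]$, $D_\alpha^{\mathsf c} = [0,1]\setminus D_\alpha$, $I_\alpha = [\min\{\alpha,1-\alpha\},1]$, and $T_\alpha : I_\alpha \to I_\alpha$, $T_\alpha(x) = \frac1x - \lfloor \frac1x \rfloor$ if $x \in D_\alpha^{\mathsf c}$, $T_\alpha(x) = 1 + \lfloor \frac1x \rfloor - \frac1x$ if $x \in D_\alpha$. *)

theory Defs
  imports Complex_Main
begin

definition D_alpha :: "real \<Rightarrow> real set" where
  "D_alpha \<alpha> = (\<Union>n\<in>{1::nat..}. {1 / (real n + \<alpha>) .. 1 / real n})"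

definition I_alpha :: "real \<Rightarrow> real set" where
  "I_alpha \<alpha> = {min \<alpha> (1 - \<alpha>) .. 1}"

text \<open>The map T_alpha, given by its defining formula (intended domain I_alpha).\<close>
definition T_alpha :: "real \<Rightarrow> real \<Rightarrow> real" where
  "T_alpha \<alpha> x = (if x \<in> D_alpha \<alpha>
                     then 1 + of_int \<lfloor>1 / x\<rfloor> - 1 / x
                     else 1 / x - of_int \<lfloor>1 / x\<rfloor>)"

end

theory Submission
  imports Defs
begin

text \<open>
  On \<open>(0, 1]\<close> the map \<open>T_alpha \<alpha>\<close> depends on \<open>y\<close> only through \<open>frac (1 / y)\<close>:
  \<open>y \<in> D_alpha \<alpha>\<close> just says \<open>frac (1 / y) \<le> \<alpha>\<close>.  Now \<open>1 / (1 - \<alpha>) = 1 + \<alpha> / (1 - \<alpha>)\<close>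
  with \<open>\<alpha> < \<alpha> / (1 - \<alpha>) < 1\<close>, so \<open>T_alpha \<alpha> (1 - \<alpha>) = \<alpha> / (1 - \<alpha>)\<close>, and the reciprocal
  of this point is \<open>1 / \<alpha> - 1\<close>, which has the same fractional part as \<open>1 / \<alpha>\<close>.
\<close>

lemma mem_D_alpha_iff_frac_le:
  fixes \<alpha> y :: real
  assumes "0 < y" "y \<le> 1" and "0 \<le> \<alpha>" "\<alpha> < 1"
  shows "y \<in> D_alpha \<alpha> \<longleftrightarrow> frac (1 / y) \<le> \<alpha>"
proof
  assume "y \<in> D_alpha \<alpha>"
  then obtain n :: nat where n: "n \<ge> 1" "1 / (real n + \<alpha>) \<le> y" "y \<le> 1 / real n"
    unfolding D_alpha_def by auto
  have lower: "real n \<le> 1 / y"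
    using n assms by (simp add: field_simps)
  have upper: "1 / y \<le> real n + \<alpha>"
    using n assms by (simp add: field_simps)
  have "\<lfloor>1 / y\<rfloor> = int n"
    using lower upper assms by (intro floor_unique) auto
  then show "frac (1 / y) \<le> \<alpha>"
    using upper by (simp add: frac_def)
next
  assume frac_le: "frac (1 / y) \<le> \<alpha>"
  define n where "n = nat \<lfloor>1 / y\<rfloor>"
  have "1 \<le> 1 / y"
    using assms by simp
  then have n_floor: "real n = of_int \<lfloor>1 / y\<rfloor>" and "n \<ge> 1"
    unfolding n_def by linarith+
  have "real n \<le> 1 / y" "1 / y \<le> real n + \<alpha>"
    using n_floor frac_le by (auto simp: frac_def)
  then have "1 / (real n + \<alpha>) \<le> y" "y \<le> 1 / real n"
    using assms \<open>n \<ge> 1\<close> by (simp_all add: field_simps)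
  then show "y \<in> D_alpha \<alpha>"
    unfolding D_alpha_def using \<open>n \<ge> 1\<close> by auto
qed

lemma T_alpha_eq_frac:
  fixes \<alpha> y :: real
  assumes "0 < y" "y \<le> 1" and "0 \<le> \<alpha>" "\<alpha> < 1"
  shows "T_alpha \<alpha> y = (if frac (1 / y) \<le> \<alpha> then 1 - frac (1 / y) else frac (1 / y))"
  using mem_D_alpha_iff_frac_le[OF assms] unfolding T_alpha_def frac_def by auto

lemma T_alpha_cong_frac_inverse:
  fixes \<alpha> x y :: real
  assumes "0 < x" "x \<le> 1" "0 < y" "y \<le> 1" and "0 \<le> \<alpha>" "\<alpha> < 1"
    and "frac (1 / x) = frac (1 / y)"
  shows "T_alpha \<alpha> x = T_alpha \<alpha> y"
  using assms by (simp add: T_alpha_eq_frac)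

lemma T_alpha_one_minus:
  fixes \<alpha> :: real
  assumes "0 < \<alpha>" "\<alpha> < 1 / 2"
  shows "T_alpha \<alpha> (1 - \<alpha>) = \<alpha> / (1 - \<alpha>)"
proof -
  have "1 / (1 - \<alpha>) = \<alpha> / (1 - \<alpha>) + 1"
    using assms by (simp add: field_simps)
  moreover have "\<alpha> < \<alpha> / (1 - \<alpha>)" "\<alpha> / (1 - \<alpha>) < 1"
    using assms by (simp_all add: field_simps)
  ultimately have "frac (1 / (1 - \<alpha>)) = \<alpha> / (1 - \<alpha>)"
    using assms by (simp add: frac_1_eq frac_eq)
  then show ?thesis
    using assms \<open>\<alpha> < \<alpha> / (1 - \<alpha>)\<close> by (simp add: T_alpha_eq_frac)
qed

theorem proposition3p1:
  fixes \<alpha> :: real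
  assumes "0 < \<alpha>" and "\<alpha> < 1 / 2"
  shows "T_alpha \<alpha> \<alpha> = T_alpha \<alpha> (T_alpha \<alpha> (1 - \<alpha>))"
proof -
  have "1 / (\<alpha> / (1 - \<alpha>)) = 1 / \<alpha> - 1"
    using assms by (simp add: field_simps)
  then have "frac (1 / \<alpha>) = frac (1 / (\<alpha> / (1 - \<alpha>)))"
    by (metis diff_add_cancel frac_1_eq)
  moreover have "0 < \<alpha> / (1 - \<alpha>)" "\<alpha> / (1 - \<alpha>) \<le> 1"
    using assms by (simp_all add: field_simps)
  ultimately show ?thesis
    unfolding T_alpha_one_minus[OF assms] using assms
    by (intro T_alpha_cong_frac_inverse) auto
qed

end
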